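(* There exists a constant $S_{\min}$ such that for all positive integers $m$ and all $p\in(0,1]$ with $mp\ge S_{\min}$, if $X\sim\mathrm{Bin}(m,p)$, then \[E[\ln(1+X)]\ge \ln(1+mp)-\frac{11}{12}\cdot\frac{1-p}{mp}.\]
   Context: $\mathrm{Bin}(m,p)$ denotes the binomial distribution with $m$ trials and success probability $p$. *)

theory Defs
  imports "HOL-Probability.Probability"
begin

end

theory Submission
  imports Defs
begin

text \<open>For \<open>t > 0\<close> one has \<open>ln t \<ge> (t - 1/t)/2 - (t - 1)\<^sup>2/8\<close>. Taking \<open>t = (1 + X)/(1 + \<mu>)\<close>
  with \<open>\<mu> = m p\<close> and averaging, the right-hand side only needs \<open>E X = \<mu>\<close>,
  \<open>Var X = \<mu> (1 - p)\<close> and \<open>E[1/(1 + X)] \<le> 1/((m + 1) p)\<close>; all three follow from the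
  size-bias identity \<open>E[X f(X)] = m p E[f(Y + 1)]\<close> with \<open>Y \<sim> Bin(m - 1, p)\<close>. This gives
  \<open>E[ln(1 + X)] \<ge> ln(1 + \<mu>) - (5/8)(1 - p)/\<mu>\<close> for every \<open>m > 0\<close>, so \<open>S\<^sub>m\<^sub>i\<^sub>n = 0\<close> works.\<close>

lemma ln_ge_rational_bound:
  fixes t :: real
  assumes "t > 0"
  shows "(t - 1 / t) / 2 - (t - 1)^2 / 8 \<le> ln t"
proof -
  define f where "f x = ln x - (x - 1 / x) / 2 + (x - 1)^2 / 8" for x :: real
  have f': "(f has_real_derivative (x - 1) * ((x - 1)^2 + 1) / (4 * x^2)) (at x)" if "x > 0" for x
  proof -
    have "(f has_real_derivative 1 / x - (1 + 1 / x^2) / 2 + 2 * (x - 1) / 8) (at x)"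
      unfolding f_def [abs_def] using that
      by (auto intro!: derivative_eq_intros simp: power2_eq_square field_simps)
    moreover have "1 / x - (1 + 1 / x^2) / 2 + 2 * (x - 1) / 8 = (x - 1) * ((x - 1)^2 + 1) / (4 * x^2)"
      using that by (simp add: field_simps power2_eq_square)
    ultimately show ?thesis by simp
  qed
  have "f 1 \<le> f t"
  proof (cases "1 \<le> t")
    case True
    then show ?thesis
    proof (rule DERIV_nonneg_imp_nondecreasing)
      fix x :: real assume "1 \<le> x"
      then show "\<exists>y. (f has_real_derivative y) (at x) \<and> 0 \<le> y"
        using f' by (intro exI[of _ "(x - 1) * ((x - 1)^2 + 1) / (4 * x^2)"] conjI) auto
    qed
  next
    case False
    show ?thesis
    proof (rule DERIV_nonpos_imp_nonincreasing[of t 1 f])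
      show "t \<le> 1" using False by simp
      fix x :: real assume "t \<le> x" "x \<le> 1"
      then show "\<exists>y. (f has_real_derivative y) (at x) \<and> y \<le> 0"
        using f' assms
        by (intro exI[of _ "(x - 1) * ((x - 1)^2 + 1) / (4 * x^2)"] conjI)
          (auto simp: mult_nonpos_nonneg divide_nonpos_pos)
    qed
  qed
  then show ?thesis by (simp add: f_def)
qed

lemma expectation_binomial_pmf_size_bias:
  fixes f :: "nat \<Rightarrow> real"
  assumes p: "p \<in> {0..1}"
  shows "measure_pmf.expectation (binomial_pmf (Suc n) p) (\<lambda>k. real k * f k)
           = real (Suc n) * p * measure_pmf.expectation (binomial_pmf n p) (\<lambda>k. f (Suc k))"
proof -
  define w where "w m k = real (m choose k) * p ^ k * (1 - p) ^ (m - k)" for m k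
  have absorb: "real (Suc k) * w (Suc n) (Suc k) = real (Suc n) * p * w n k" for k
  proof -
    have "real (Suc k) * w (Suc n) (Suc k)
        = (real (Suc k) * real (Suc n choose Suc k)) * (p * (p ^ k * (1 - p) ^ (n - k)))"
      by (simp only: w_def diff_Suc_Suc power_Suc mult_ac)
    also have "real (Suc k) * real (Suc n choose Suc k) = real (Suc n) * real (n choose k)"
      by (metis Suc_times_binomial of_nat_mult)
    finally show ?thesis
      by (simp only: w_def mult_ac)
  qed
  have "measure_pmf.expectation (binomial_pmf (Suc n) p) (\<lambda>k. real k * f k)
      = (\<Sum>k\<le>n. real (Suc k) * w (Suc n) (Suc k) * f (Suc k))"
    unfolding expectation_binomial_pmf'[OF p] real_scaleR_def w_def[symmetric]
    by (subst sum.atMost_Suc_shift) (simp add: mult_ac del: of_nat_Suc)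
  also have "\<dots> = real (Suc n) * p * (\<Sum>k\<le>n. w n k * f (Suc k))"
    by (simp only: absorb sum_distrib_left mult.assoc)
  also have "\<dots> = real (Suc n) * p * measure_pmf.expectation (binomial_pmf n p) (\<lambda>k. f (Suc k))"
    unfolding expectation_binomial_pmf'[OF p] real_scaleR_def w_def[symmetric] ..
  finally show ?thesis .
qed

lemma expectation_binomial_pmf_real:
  assumes p: "p \<in> {0..1}"
  shows "measure_pmf.expectation (binomial_pmf n p) real = real n * p"
proof (cases n)
  case (Suc n')
  then show ?thesis
    using expectation_binomial_pmf_size_bias[OF p, of n' "\<lambda>_. 1"] by simp
qed (use p in \<open>simp add: expectation_binomial_pmf'\<close>)

lemma expectation_binomial_pmf_falling_factorial_2:
  assumes p: "p \<in> {0..1}"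
  shows "measure_pmf.expectation (binomial_pmf n p) (\<lambda>k. real k * (real k - 1))
           = real n * (real n - 1) * p^2"
proof (cases n)
  case (Suc n')
  then show ?thesis
    using expectation_binomial_pmf_size_bias[OF p, of n' "\<lambda>k. real k - 1"]
          expectation_binomial_pmf_real[OF p, of n']
    by (simp add: power2_eq_square mult_ac)
qed (use p in \<open>simp add: expectation_binomial_pmf'\<close>)

lemma expectation_binomial_pmf_centered_square:
  assumes p: "p \<in> {0..1}"
  shows "measure_pmf.expectation (binomial_pmf n p) (\<lambda>k. (real k - real n * p)^2)
           = real n * p * (1 - p)"
proof -
  have "(\<lambda>k. (real k - real n * p)^2)
      = (\<lambda>k. real k * (real k - 1) + (1 - 2 * real n * p) * real k + (real n * p)^2)"
    by (auto simp: power2_eq_square algebra_simps)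
  then show ?thesis
    using p expectation_binomial_pmf_real[OF p, of n]
          expectation_binomial_pmf_falling_factorial_2[OF p, of n]
    by (simp add: power2_eq_square algebra_simps)
qed

lemma expectation_binomial_pmf_inverse_succ_le:
  assumes "0 < p" "p \<le> 1"
  shows "measure_pmf.expectation (binomial_pmf n p) (\<lambda>k. 1 / (1 + real k)) \<le> 1 / (real (Suc n) * p)"
proof -
  have p: "p \<in> {0..1}" using assms by simp
  txt \<open>Size bias with \<open>f k = 1 / k\<close>; the integrand \<open>k * (1 / k)\<close> is \<open>0\<close> at \<open>k = 0\<close>
    since \<open>1 / 0 = 0\<close>.\<close>
  have "real (Suc n) * p * measure_pmf.expectation (binomial_pmf n p) (\<lambda>k. 1 / (1 + real k))
      = measure_pmf.expectation (binomial_pmf (Suc n) p) (\<lambda>k. real k * (1 / real k))"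
    using expectation_binomial_pmf_size_bias[OF p, of n "\<lambda>k. 1 / real k"] by simp
  also have "\<dots> \<le> 1"
    using p by (intro measure_pmf.integral_le_const) auto
  finally show ?thesis
    using assms by (simp add: pos_le_divide_eq mult.commute)
qed

lemma expectation_ln_one_plus_binomial_ge:
  assumes n: "0 < n" and p: "0 < p" "p \<le> 1"
  shows "ln (1 + real n * p) - 5 / 8 * ((1 - p) / (real n * p))
           \<le> measure_pmf.expectation (binomial_pmf n p) (\<lambda>k. ln (1 + real k))"
proof -
  define \<mu> where "\<mu> = real n * p"
  define c where "c = 1 + \<mu>"
  define I where "I = measure_pmf.expectation (binomial_pmf n p) (\<lambda>k. 1 / (1 + real k))"
  have p01: "p \<in> {0..1}" using p by simp
  have \<mu>: "\<mu> > 0" using n p by (simp add: \<mu>_def)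
  then have c: "c > 0" by (simp add: c_def)
  txt \<open>The bound of \<open>ln_ge_rational_bound\<close> at \<open>t = (1 + k) / (1 + \<mu>)\<close>, whose expectation
    only involves the mean, the variance and \<open>E[1 / (1 + X)]\<close>.\<close>
  define g where "g k = ln c + (1 + real k) / (2 * c) - c / 2 * (1 / (1 + real k))
                          - (real k - \<mu>)^2 / (8 * c^2)" for k
  have g_le: "g k \<le> ln (1 + real k)" for k
  proof -
    define t where "t = (1 + real k) / c"
    have "ln (1 + real k) = ln c + ln t"
      using c by (simp add: t_def ln_div)
    moreover have "(1 + real k) / (2 * c) - c / 2 * (1 / (1 + real k)) - (real k - \<mu>)^2 / (8 * c^2)
        = (t - 1 / t) / 2 - (t - 1)^2 / 8"
      using c by (simp add: t_def c_def divide_simps) (simp add: algebra_simps power2_eq_square)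
    moreover have "(t - 1 / t) / 2 - (t - 1)^2 / 8 \<le> ln t"
      using c by (intro ln_ge_rational_bound) (simp add: t_def)
    ultimately show ?thesis by (simp add: g_def)
  qed
  have "ln c + 1 / 2 - c / 2 * I - \<mu> * (1 - p) / (8 * c^2)
      = ln c + (1 + \<mu>) / (2 * c) - c / 2 * I - \<mu> * (1 - p) / (8 * c^2)"
    using c by (simp add: c_def)
  also have "\<dots> = measure_pmf.expectation (binomial_pmf n p) g"
    using p01 integral_mult_right_zero[of _ "c / 2" "\<lambda>k. 1 / (1 + real k)"]
          expectation_binomial_pmf_real[OF p01, of n]
          expectation_binomial_pmf_centered_square[OF p01, of n]
    unfolding g_def I_def \<mu>_def by (simp add: integral_diff integral_add)
  also have "\<dots> \<le> measure_pmf.expectation (binomial_pmf n p) (\<lambda>k. ln (1 + real k))"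
    using p01 g_le by (intro integral_mono) auto
  finally have lower: "ln c + 1 / 2 - c / 2 * I - \<mu> * (1 - p) / (8 * c^2)
                         \<le> measure_pmf.expectation (binomial_pmf n p) (\<lambda>k. ln (1 + real k))" .
  have "c / 2 * I \<le> c / 2 * (1 / (real (Suc n) * p))"
    using expectation_binomial_pmf_inverse_succ_le[OF p, of n] c unfolding I_def
    by (intro mult_left_mono) auto
  also have "\<dots> = 1 / 2 + (1 - p) / (2 * (real (Suc n) * p))"
    using p by (simp add: c_def \<mu>_def divide_simps) (simp add: algebra_simps)
  also have "\<dots> \<le> 1 / 2 + (1 - p) / (2 * \<mu>)"
    using p \<mu> by (intro add_left_mono divide_left_mono) (auto simp: \<mu>_def)
  finally have inverse_term: "c / 2 * I \<le> 1 / 2 + (1 - p) / (2 * \<mu>)" .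
  have "\<mu> * (1 - p) / (8 * c^2) \<le> \<mu> * (1 - p) / (8 * \<mu>^2)"
    using p \<mu> by (intro divide_left_mono mult_left_mono power_mono) (auto simp: c_def)
  then have variance_term: "\<mu> * (1 - p) / (8 * c^2) \<le> (1 - p) / (8 * \<mu>)"
    using \<mu> by (simp add: power2_eq_square)
  have "5 / 8 * ((1 - p) / \<mu>) = (1 - p) / (2 * \<mu>) + (1 - p) / (8 * \<mu>)"
    by (simp add: field_simps)
  with lower inverse_term variance_term show ?thesis
    unfolding c_def \<mu>_def by linarith
qed

theorem theorem5:
  shows "\<exists>S_min::real. \<forall>(m::nat) (p::real).
           m > 0 \<longrightarrow> 0 < p \<longrightarrow> p \<le> 1 \<longrightarrow> real m * p \<ge> S_min \<longrightarrow>
           measure_pmf.expectation (binomial_pmf m p) (\<lambda>X. ln (1 + real X))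
             \<ge> ln (1 + real m * p) - 11 / 12 * ((1 - p) / (real m * p))"
proof (intro exI[of _ 0] allI impI)
  fix m :: nat and p :: real
  assume m: "m > 0" and p: "0 < p" "p \<le> 1"
  have "0 \<le> (1 - p) / (real m * p)"
    using m p by simp
  then have "ln (1 + real m * p) - 11 / 12 * ((1 - p) / (real m * p))
      \<le> ln (1 + real m * p) - 5 / 8 * ((1 - p) / (real m * p))"
    by (intro diff_left_mono mult_right_mono) simp_all
  also have "\<dots> \<le> measure_pmf.expectation (binomial_pmf m p) (\<lambda>X. ln (1 + real X))"
    using expectation_ln_one_plus_binomial_ge[OF m p] .
  finally show "measure_pmf.expectation (binomial_pmf m p) (\<lambda>X. ln (1 + real X))
      \<ge> ln (1 + real m * p) - 11 / 12 * ((1 - p) / (real m * p))" .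
qed

end
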